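(* Consider the multivariate linear model ${\bf y}_i={B^*}^T{\bf x}_i+\boldsymbol\epsilon_i$, $i=1,\dots,n$, with fixed design $X=({\bf x}_1,\dots,{\bf x}_n)^T\in\mathbb{R}^{n\times p}$, $n>p$, $X^TX$ invertible, unknown $B^*=(\boldsymbol\beta^*_1,\dots,\boldsymbol\beta^*_r)\in\mathbb{R}^{p\times r}$, and errors $\boldsymbol\epsilon_i=(\epsilon_{i1},\dots,\epsilon_{ir})^T$ i.i.d. over $i$ with mean zero, $E(\epsilon_{ic}^2)=1$ for all $i,c$, and $E(\epsilon_{ic}\epsilon_{ik})=\rho$ for $c\neq k$, where $\rho\in(0,1)$. Fix a partition $D=(D_1,\dots,D_Q)$ of $\{1,\dots,r\}$. Let $\dot B=(\dot{\boldsymbol\beta}_1,\dots,\dot{\boldsymbol\beta}_r)$ with $\dot{\boldsymbol\beta}_c=(X^TX)^{-1}X^T{\bf y}_c$ be the OLS estimates, and for $\gamma\ge0$ let $\bar B=\bar B(\gamma)$ be the minimizer over $B\in\mathbb{R}^{p\times r}$ of $$\frac{1}{2n}\sum_{i=1}^n\sum_{c=1}^r (y_{ic}-{\bf x}_i^T\boldsymbol\beta_c)^2+\frac{\gamma}{2n}\sum_{q=1}^Q\frac{1}{|D_q|}\sum_{l,m\in D_q}\|X(\boldsymbol\beta_l-\boldsymbol\beta_m)\|_2^2$$ (lasso parameter $\delta=0$). Then, for fixed $n$ and $p$, there exists $\gamma>0$ such that $$E\left(\|\bar B-B^*\|_2^2\right)\le E\left(\|\dot B-B^*\|_2^2\r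ight).$$
   Context: ${\bf y}_c\in\mathbb{R}^n$ is the $c$th column of $Y=({\bf y}_1,\dots,{\bf y}_n)^T\in\mathbb{R}^{n\times r}$ (response vectors ${\bf y}_i\in\mathbb{R}^r$ as rows), $y_{ic}$ its $(i,c)$ entry. For a matrix, $\|\cdot\|_2$ denotes the entrywise $L_2$ norm. The inner sum $\sum_{l,m\in D_q}$ runs over all ordered pairs $(l,m)$ in $D_q$. Expectations are over the errors. It is not assumed that responses in the same cluster have equal coefficients. *)

theory Defs
  imports "HOL-Probability.Probability"
begin

text \<open>Matrices are Cartesian-product types: X :: real^'p^'n (n x p),
  B :: real^'r^'p (p x r), Y :: real^'r^'n (n x r). The c-th column of B is
  \<open>column c B\<close> (coefficient vector beta_c).\<close>

definition is_partition :: "'a set set \<Rightarrow> bool" where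
  "is_partition D \<longleftrightarrow> (\<forall>d\<in>D. d \<noteq> {}) \<and>
     (\<forall>d\<in>D. \<forall>d'\<in>D. d \<noteq> d' \<longrightarrow> d \<inter> d' = {}) \<and> \<Union>D = UNIV"

definition frob2 :: "real^'m^'k \<Rightarrow> real" where
  "frob2 A = (\<Sum>i\<in>UNIV. \<Sum>j\<in>UNIV. (A $ i $ j)^2)"

definition objective ::
  "real \<Rightarrow> real^'p^'n \<Rightarrow> 'r set set \<Rightarrow> real^'r^'n \<Rightarrow> real^'r^'p \<Rightarrow> real" where
  "objective \<gamma> X D Y B =
     1 / (2 * real CARD('n)) * (\<Sum>i\<in>UNIV. \<Sum>c\<in>UNIV. (Y $ i $ c - (X $ i) \<bullet> column c B)^2)
   + \<gamma> / (2 * real CARD('n)) *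
       (\<Sum>d\<in>D. 1 / real (card d) *
          (\<Sum>l\<in>d. \<Sum>m\<in>d. (norm (X *v (column l B - column m B)))^2))"

text \<open>The minimizer \<open>\<bar>B(\<gamma>)\<close> (unique when X^T X is invertible and \<gamma> \<ge> 0).\<close>
definition barB ::
  "real \<Rightarrow> real^'p^'n \<Rightarrow> 'r set set \<Rightarrow> real^'r^'n \<Rightarrow> real^'r^'p" where
  "barB \<gamma> X D Y = (THE B. \<forall>B'. objective \<gamma> X D Y B \<le> objective \<gamma> X D Y B')"

definition dotB :: "real^'p^'n \<Rightarrow> real^'r^'n \<Rightarrow> real^'r^'p" where
  "dotB X Y = matrix_inv (transpose X ** X) ** transpose X ** Y"

end

theory Submission
  imports Defs
begin

(* With X^T X invertible, the fused objective is a strictly convex quadratic whose normal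
   equations are solved by shrinking every OLS column towards its cluster mean:
   barB(gamma) = dotB S(s), where S(s) = s I + (1 - s) P, s = 1 / (1 + 2 gamma), and P
   averages within clusters. Hence barB - Bstar = A E S(s) + (1 - s) (Bstar P - Bstar) with
   A = (X^T X)^-1 X^T, and for equicorrelated rows of independent noise the risk is
     ||A||^2 (r - (1 - rho) (1 - s^2) (r - Q)) + (1 - s)^2 ||Bstar P - Bstar||^2.
   OLS is the case s = 1. Moving s below 1 lowers the variance to first order in 1 - s but
   raises the bias only to second order, so some gamma > 0 does at least as well. *)

definition cluster :: "'a set set \<Rightarrow> 'a \<Rightarrow> 'a set" where
  "cluster D c = (THE d. d \<in> D \<and> c \<in> d)"

lemma partition_ex1_block:
  assumes "is_partition D"
  shows "\<exists>!d. d \<in> D \<and> c \<in> d"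
proof -
  from assms obtain d where "d \<in> D" "c \<in> d"
    unfolding is_partition_def by blast
  moreover have "d' = d" if "d' \<in> D" "c \<in> d'" for d'
    using assms that calculation unfolding is_partition_def by blast
  ultimately show ?thesis by blast
qed

lemma
  assumes "is_partition D"
  shows cluster_in_partition: "cluster D c \<in> D"
    and mem_cluster: "c \<in> cluster D c"
  using theI'[OF partition_ex1_block[OF assms]] unfolding cluster_def by auto

lemma cluster_eqI:
  assumes "is_partition D" "d \<in> D" "c \<in> d"
  shows "cluster D c = d"
  using the1_equality[OF partition_ex1_block[OF assms(1)]] assms unfolding cluster_def by auto

lemma mem_cluster_iff:
  assumes "is_partition D"
  shows "m \<in> cluster D l \<longleftrightarrow> cluster D m = cluster D l"
  using assms by (metis cluster_eqI cluster_in_partition mem_cluster)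

lemma card_cluster_pos:
  assumes "is_partition D"
  shows "0 < card (cluster D (c::'a::finite))"
  using mem_cluster[OF assms] by (auto simp: card_gt_0_iff)

lemma sum_partition_blocks:
  assumes "is_partition D"
  shows "(\<Sum>d\<in>D. \<Sum>l\<in>d. F d l) = (\<Sum>l\<in>(UNIV::'a::finite set). F (cluster D l) l)"
proof -
  have "(\<Sum>d\<in>D. \<Sum>l\<in>d. F d l) = (\<Sum>d\<in>D. \<Sum>l\<in>d. F (cluster D l) l)"
    by (intro sum.cong refl) (simp add: cluster_eqI[OF assms])
  also have "\<dots> = (\<Sum>l\<in>\<Union>D. F (cluster D l) l)"
    using assms by (subst sum.Union_disjoint) (simp_all add: is_partition_def)
  also have "\<dots> = (\<Sum>l\<in>UNIV. F (cluster D l) l)"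
    using assms by (simp add: is_partition_def)
  finally show ?thesis .
qed

definition cluster_mean :: "'a set set \<Rightarrow> ('a \<Rightarrow> 'v::real_vector) \<Rightarrow> 'a \<Rightarrow> 'v" where
  "cluster_mean D f c = (1 / real (card (cluster D c))) *\<^sub>R (\<Sum>m\<in>cluster D c. f m)"

lemma cluster_mean_linear:
  "cluster_mean D (\<lambda>c. a *\<^sub>R f c + b *\<^sub>R g c) c
    = a *\<^sub>R cluster_mean D f c + b *\<^sub>R cluster_mean D g c"
  by (simp add: cluster_mean_def sum.distrib scaleR_sum_right[symmetric] scaleR_add_right)

lemma cluster_mean_idem:
  assumes "is_partition D"
  shows "cluster_mean D (cluster_mean D f) c = cluster_mean D f (c::'a::finite)"
proof -
  have "(\<Sum>m\<in>cluster D c. cluster_mean D f m) = (\<Sum>m\<in>cluster D c. cluster_mean D f c)"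
    by (intro sum.cong refl) (simp add: cluster_mean_def mem_cluster_iff[OF assms])
  also have "\<dots> = real (card (cluster D c)) *\<^sub>R cluster_mean D f c"
    by (rule sum_constant_scaleR)
  finally show ?thesis
    using card_cluster_pos[OF assms, of c] by (simp add: cluster_mean_def)
qed

lemma pairwise_inner_sum_eq_centered:
  fixes a w :: "'a \<Rightarrow> 'v::real_inner"
  assumes "finite d" "d \<noteq> {}"
  shows "1 / real (card d) * (\<Sum>l\<in>d. \<Sum>m\<in>d. inner (a l - a m) (w l - w m))
     = 2 * (\<Sum>l\<in>d. inner (a l - (1 / real (card d)) *\<^sub>R (\<Sum>m\<in>d. a m)) (w l))"
proof -
  define n where "n = real (card d)"
  have "n \<noteq> 0" using assms by (simp add: n_def)
  define P where "P = (\<Sum>l\<in>d. inner (a l) (w l))"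
  define Q where "Q = inner (\<Sum>m\<in>d. a m) (\<Sum>m\<in>d. w m)"
  have "(\<Sum>l\<in>d. \<Sum>m\<in>d. inner (a l) (w m)) = Q"
    by (simp add: Q_def inner_sum_left inner_sum_right) (rule sum.swap)
  moreover have "(\<Sum>l\<in>d. \<Sum>m\<in>d. inner (a m) (w l)) = Q"
    by (simp add: Q_def inner_sum_left inner_sum_right)
  ultimately have "(\<Sum>l\<in>d. \<Sum>m\<in>d. inner (a l - a m) (w l - w m)) = 2 * n * P - 2 * Q"
    by (simp add: inner_diff_left inner_diff_right sum.distrib sum_subtractf n_def P_def
        sum_distrib_left mult.assoc)
  moreover have "(\<Sum>l\<in>d. inner (a l - (1 / n) *\<^sub>R (\<Sum>m\<in>d. a m)) (w l)) = P - Q / n"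
    by (simp add: inner_diff_left sum_subtractf P_def Q_def inner_sum_right sum_divide_distrib)
  ultimately show ?thesis
    using \<open>n \<noteq> 0\<close> unfolding n_def[symmetric] by (simp add: field_simps)
qed

definition fusion_form :: "'a set set \<Rightarrow> ('a \<Rightarrow> 'v::real_inner) \<Rightarrow> ('a \<Rightarrow> 'v) \<Rightarrow> real" where
  "fusion_form D u w =
     (\<Sum>d\<in>D. 1 / real (card d) * (\<Sum>l\<in>d. \<Sum>m\<in>d. inner (u l - u m) (w l - w m)))"

lemma fusion_form_eq_centered:
  assumes "is_partition D"
  shows "fusion_form D a w = 2 * (\<Sum>l\<in>UNIV. inner (a l - cluster_mean D a l) (w (l::'a::finite)))"
proof -
  have "fusion_form D a w
      = (\<Sum>d\<in>D. 2 * (\<Sum>l\<in>d. inner (a l - (1 / real (card d)) *\<^sub>R (\<Sum>m\<in>d. a m)) (w l)))"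
    unfolding fusion_form_def
    using assms by (intro sum.cong refl pairwise_inner_sum_eq_centered) (auto simp: is_partition_def)
  also have "\<dots> = 2 * (\<Sum>l\<in>UNIV. inner (a l - cluster_mean D a l) (w l))"
    unfolding sum_distrib_left[symmetric] cluster_mean_def by (rule arg_cong[OF sum_partition_blocks[OF assms]])
  finally show ?thesis .
qed

lemma fusion_form_add_add:
  "fusion_form D (\<lambda>c. u c + w c) (\<lambda>c. u c + w c)
    = fusion_form D u u + 2 * fusion_form D u w + fusion_form D w w"
proof -
  have "inner ((u l + w l) - (u m + w m)) ((u l + w l) - (u m + w m))
      = inner (u l - u m) (u l - u m) + 2 * inner (u l - u m) (w l - w m) + inner (w l - w m) (w l - w m)"
    for l m
    by (simp add: algebra_simps inner_add_left inner_add_right inner_diff_left inner_diff_right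
        inner_commute)
  then show ?thesis
    by (simp add: fusion_form_def sum.distrib distrib_left sum_distrib_left mult.left_commute)
qed

lemma fusion_form_nonneg: "0 \<le> fusion_form D w w"
  unfolding fusion_form_def by (intro sum_nonneg mult_nonneg_nonneg) auto

lemma objective_columns:
  fixes X :: "real^'p^'n" and Y :: "real^'r^'n" and B :: "real^'r^'p"
  shows "objective \<gamma> X D Y B =
     1 / (2 * real CARD('n)) * (\<Sum>c\<in>UNIV. (norm (column c Y - X *v column c B))\<^sup>2)
   + \<gamma> / (2 * real CARD('n)) * fusion_form D (\<lambda>c. X *v column c B) (\<lambda>c. X *v column c B)"
proof -
  have norm_sq: "(norm v)\<^sup>2 = (\<Sum>i\<in>UNIV. (v $ i)\<^sup>2)" for v :: "real^'n"
    unfolding power2_norm_eq_inner inner_vec_def by (simp add: power2_eq_square)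
  show ?thesis
    unfolding objective_def fusion_form_def power2_norm_eq_inner[symmetric] norm_sq
      matrix_vector_mult_diff_distrib[symmetric]
    by (simp add: sum.swap[of _ "UNIV::'n set"] column_def matrix_vector_mult_def inner_vec_def)
qed

lemma
  fixes G :: "real^'n^'n"
  assumes "invertible G"
  shows matrix_inv_right: "G ** matrix_inv G = mat 1"
    and matrix_inv_left: "matrix_inv G ** G = mat 1"
  using someI_ex[OF assms[unfolded invertible_def]] unfolding matrix_inv_def by auto

lemma column_matrix_mult: "column c (A ** B) = (A::real^'n^'m) *v column c B"
  by (simp add: column_def matrix_matrix_mult_def matrix_vector_mult_def vec_eq_iff)

lemma inner_matrix_vector_right: "inner (v::real^'n) (X *v u) = inner (transpose X *v v) (u::real^'m)"
  by (metis dot_lmul_matrix vector_transpose_matrix transpose_transpose)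

lemma matrix_vector_eq_0_imp_eq_0:
  fixes X :: "real^'p^'n"
  assumes "invertible (transpose X ** X)" and "X *v d = 0"
  shows "d = 0"
proof -
  have "(transpose X ** X) *v d = 0"
    using assms(2) by (simp add: matrix_vector_mul_assoc[symmetric])
  then have "(matrix_inv (transpose X ** X) ** (transpose X ** X)) *v d = 0"
    by (simp add: matrix_vector_mul_assoc[symmetric])
  then show ?thesis by (simp add: matrix_inv_left[OF assms(1)])
qed

lemma dotB_normal_equations:
  assumes "invertible (transpose X ** X)"
  shows "transpose X *v (X *v column c (dotB X Y) - column c Y) = 0"
proof -
  have "transpose X *v (X *v column c (dotB X Y))
      = ((transpose X ** X) ** matrix_inv (transpose X ** X) ** transpose X) *v column c Y"
    by (simp add: dotB_def column_matrix_mult matrix_vector_mul_assoc matrix_mul_assoc)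
  then show ?thesis
    by (simp add: matrix_inv_right[OF assms] matrix_vector_mult_diff_distrib)
qed

definition objective_quadratic_part :: "real \<Rightarrow> real^'p^'n \<Rightarrow> 'r set set \<Rightarrow> real^'r^'p \<Rightarrow> real" where
  "objective_quadratic_part \<gamma> X D \<Delta> = (\<Sum>c\<in>UNIV. (norm (X *v column c \<Delta>))\<^sup>2)
     + \<gamma> * fusion_form D (\<lambda>c. X *v column c \<Delta>) (\<lambda>c. X *v column c \<Delta>)"

lemma objective_quadratic_part_nonneg: "0 \<le> \<gamma> \<Longrightarrow> 0 \<le> objective_quadratic_part \<gamma> X D \<Delta>"
  unfolding objective_quadratic_part_def
  by (intro add_nonneg_nonneg sum_nonneg mult_nonneg_nonneg fusion_form_nonneg) auto

lemma objective_quadratic_part_pos: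
  fixes X :: "real^'p^'n" and \<Delta> :: "real^'r^'p"
  assumes inv: "invertible (transpose X ** X)" and "0 \<le> \<gamma>" and "\<Delta> \<noteq> 0"
  shows "0 < objective_quadratic_part \<gamma> X D \<Delta>"
proof -
  obtain i c where "\<Delta> $ i $ c \<noteq> 0"
    using \<open>\<Delta> \<noteq> 0\<close> by (auto simp: vec_eq_iff)
  then have "column c \<Delta> \<noteq> 0"
    by (auto simp: column_def vec_eq_iff)
  then have "0 < (norm (X *v column c \<Delta>))\<^sup>2"
    using matrix_vector_eq_0_imp_eq_0[OF inv] by auto
  also have "\<dots> \<le> (\<Sum>c\<in>UNIV. (norm (X *v column c \<Delta>))\<^sup>2)"
    by (rule member_le_sum) auto
  finally show ?thesis
    unfolding objective_quadratic_part_def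
    by (intro add_pos_nonneg mult_nonneg_nonneg fusion_form_nonneg \<open>0 \<le> \<gamma>\<close>)
qed

lemma objective_shift:
  fixes X :: "real^'p^'n" and Y :: "real^'r^'n" and B \<Delta> :: "real^'r^'p"
  assumes part: "is_partition D"
    and normal: "\<And>c. transpose X *v ((X *v column c B - column c Y)
       + (2 * \<gamma>) *\<^sub>R (X *v column c B - cluster_mean D (\<lambda>k. X *v column k B) c)) = 0"
  shows "objective \<gamma> X D Y (B + \<Delta>)
    = objective \<gamma> X D Y B + 1 / (2 * real CARD('n)) * objective_quadratic_part \<gamma> X D \<Delta>"
proof -
  define u where "u c = X *v column c B" for c
  define w where "w c = X *v column c \<Delta>" for c
  define y where "y c = column c Y" for c
  have shifted: "X *v column c (B + \<Delta>) = u c + w c" for c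
  proof -
    have "column c (B + \<Delta>) = column c B + column c \<Delta>" by (simp add: column_def vec_eq_iff)
    then show ?thesis by (simp add: u_def w_def matrix_vector_right_distrib)
  qed
  have "inner ((u c - y c) + (2 * \<gamma>) *\<^sub>R (u c - cluster_mean D u c)) (w c) = 0" for c
    using normal[of c] unfolding u_def[abs_def] w_def y_def by (simp add: inner_matrix_vector_right)
  then have "(\<Sum>c\<in>UNIV. inner ((u c - y c) + (2 * \<gamma>) *\<^sub>R (u c - cluster_mean D u c)) (w c)) = 0"
    by simp
  then have "(\<Sum>c\<in>UNIV. inner (u c - y c) (w c)) + \<gamma> * fusion_form D u w = 0"
    by (simp add: fusion_form_eq_centered[OF part] inner_add_left sum.distrib sum_distrib_left
        mult.assoc mult.left_commute)
  then have cross: "- 2 * (\<Sum>c\<in>UNIV. inner (y c - u c) (w c)) + \<gamma> * (2 * fusion_form D u w) = 0"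
    by (simp add: inner_diff_left sum_subtractf algebra_simps)
  have fit: "(\<Sum>c\<in>UNIV. (norm (y c - (u c + w c)))\<^sup>2)
      = (\<Sum>c\<in>UNIV. (norm (y c - u c))\<^sup>2) - 2 * (\<Sum>c\<in>UNIV. inner (y c - u c) (w c))
        + (\<Sum>c\<in>UNIV. (norm (w c))\<^sup>2)"
    by (simp add: power2_norm_eq_inner inner_diff_left inner_diff_right inner_add_left
        inner_add_right inner_commute algebra_simps sum.distrib sum_subtractf sum_distrib_left)
  define k where "k = 1 / (2 * real CARD('n))"
  have "objective \<gamma> X D Y (B + \<Delta>)
      = k * (\<Sum>c\<in>UNIV. (norm (y c - (u c + w c)))\<^sup>2)
        + (\<gamma> * k) * fusion_form D (\<lambda>c. u c + w c) (\<lambda>c. u c + w c)"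
    unfolding objective_columns shifted y_def k_def by simp
  also have "\<dots> = (k * (\<Sum>c\<in>UNIV. (norm (y c - u c))\<^sup>2) + (\<gamma> * k) * fusion_form D u u)
        + k * (- 2 * (\<Sum>c\<in>UNIV. inner (y c - u c) (w c)) + \<gamma> * (2 * fusion_form D u w))
        + k * ((\<Sum>c\<in>UNIV. (norm (w c))\<^sup>2) + \<gamma> * fusion_form D w w)"
    unfolding fit fusion_form_add_add by (simp only: algebra_simps)
  also have "\<dots> = objective \<gamma> X D Y B
        + k * ((\<Sum>c\<in>UNIV. (norm (w c))\<^sup>2) + \<gamma> * fusion_form D w w)"
    using cross unfolding objective_columns u_def[abs_def] y_def k_def by simp
  finally show ?thesis unfolding objective_quadratic_part_def w_def k_def .
qed

lemma barB_eqI: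
  fixes X :: "real^'p^'n" and Y :: "real^'r^'n" and B :: "real^'r^'p"
  assumes inv: "invertible (transpose X ** X)" and part: "is_partition D" and "0 \<le> \<gamma>"
    and normal: "\<And>c. transpose X *v ((X *v column c B - column c Y)
       + (2 * \<gamma>) *\<^sub>R (X *v column c B - cluster_mean D (\<lambda>k. X *v column k B) c)) = 0"
  shows "barB \<gamma> X D Y = B"
proof -
  have shift: "objective \<gamma> X D Y B'
      = objective \<gamma> X D Y B + 1 / (2 * real CARD('n)) * objective_quadratic_part \<gamma> X D (B' - B)"
    for B'
  proof -
    have "B + (B' - B) = B'" by simp
    then show ?thesis
      using objective_shift[OF part normal, of "B' - B"] by (simp only:)
  qed
  show ?thesis
    unfolding barB_def
  proof (rule the_equality)
    show "\<forall>B'. objective \<gamma> X D Y B \<le> objective \<gamma> X D Y B'"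
    proof
      fix B'
      have "0 \<le> 1 / (2 * real CARD('n)) * objective_quadratic_part \<gamma> X D (B' - B)"
        by (intro mult_nonneg_nonneg objective_quadratic_part_nonneg \<open>0 \<le> \<gamma>\<close>) simp
      then show "objective \<gamma> X D Y B \<le> objective \<gamma> X D Y B'"
        unfolding shift[of B'] by linarith
    qed
  next
    fix B' assume "\<forall>B''. objective \<gamma> X D Y B' \<le> objective \<gamma> X D Y B''"
    then have "objective \<gamma> X D Y B' \<le> objective \<gamma> X D Y B" by blast
    then have "1 / (2 * real CARD('n)) * objective_quadratic_part \<gamma> X D (B' - B) \<le> 0"
      unfolding shift[of B'] by linarith
    then have "objective_quadratic_part \<gamma> X D (B' - B) \<le> 0"
      by (simp add: divide_le_0_iff)
    then show "B' = B"
      using objective_quadratic_part_pos[OF inv \<open>0 \<le> \<gamma>\<close>, of "B' - B"]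
      by (metis eq_iff_diff_eq_0 not_le)
  qed
qed

definition cluster_avg_matrix :: "'a set set \<Rightarrow> real^'a^'a" where
  "cluster_avg_matrix D = (\<chi> k c. if k \<in> cluster D c then 1 / real (card (cluster D c)) else 0)"

definition shrink_matrix :: "real \<Rightarrow> 'a set set \<Rightarrow> real^'a^'a" where
  "shrink_matrix s D = s *\<^sub>R mat 1 + (1 - s) *\<^sub>R cluster_avg_matrix D"

lemma shrink_matrix_1: "shrink_matrix 1 D = mat 1"
  by (simp add: shrink_matrix_def)

lemma matrix_add_rdistrib: "((A::real^'n^'m) + B) ** (C::real^'k^'n) = A ** C + B ** C"
  by (simp add: matrix_matrix_mult_def vec_eq_iff sum.distrib distrib_right)

lemma matrix_vector_mult_cluster_mean:
  "(A::real^'m^'n) *v cluster_mean D f c = cluster_mean D (\<lambda>k. A *v f k) c"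
  unfolding cluster_mean_def
  by (simp add: matrix_vector_mult_scaleR linear_sum[OF matrix_vector_mul_linear])

lemma column_mult_cluster_avg_matrix:
  "column c ((P::real^'a^'m) ** cluster_avg_matrix D) = cluster_mean D (\<lambda>k. column k P) c"
proof -
  have "P $ i $ k * (if k \<in> cluster D c then 1 / real (card (cluster D c)) else 0)
      = (if k \<in> cluster D c then P $ i $ k / real (card (cluster D c)) else 0)" for i k
    by simp
  then show ?thesis
    unfolding column_def cluster_mean_def matrix_matrix_mult_def cluster_avg_matrix_def
    by (simp add: vec_eq_iff sum.inter_filter[symmetric] sum_divide_distrib)
qed

lemma column_mult_shrink_matrix:
  "column c ((P::real^'a^'m) ** shrink_matrix s D)
     = s *\<^sub>R column c P + (1 - s) *\<^sub>R cluster_mean D (\<lambda>k. column k P) c"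
  unfolding shrink_matrix_def matrix_add_ldistrib matrix_scalar_ac
    column_mult_cluster_avg_matrix[symmetric]
  by (simp add: column_def vec_eq_iff scalar_matrix_assoc[symmetric])

lemma barB_eq_shrink_dotB:
  fixes X :: "real^'p^'n" and Y :: "real^'r^'n"
  assumes inv: "invertible (transpose X ** X)" and part: "is_partition D" and "0 \<le> \<gamma>"
  shows "barB \<gamma> X D Y = dotB X Y ** shrink_matrix (1 / (1 + 2 * \<gamma>)) D"
proof (rule barB_eqI[OF inv part \<open>0 \<le> \<gamma>\<close>])
  fix c
  define s where "s = 1 / (1 + 2 * \<gamma>)"
  have s: "s * (1 + 2 * \<gamma>) = 1"
    using \<open>0 \<le> \<gamma>\<close> by (simp add: s_def)
  define v where "v = (\<lambda>k. X *v column k (dotB X Y))"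
  define u where "u = (\<lambda>k. X *v column k (dotB X Y ** shrink_matrix s D))"
  have u: "u = (\<lambda>k. s *\<^sub>R v k + (1 - s) *\<^sub>R cluster_mean D v k)"
    by (simp add: u_def v_def column_mult_shrink_matrix matrix_vector_right_distrib
        matrix_vector_mult_scaleR matrix_vector_mult_cluster_mean)
  have "cluster_mean D u c = cluster_mean D v c"
    unfolding u cluster_mean_linear cluster_mean_idem[OF part] by (simp flip: scaleR_add_left)
  then have "(u c - column c Y) + (2 * \<gamma>) *\<^sub>R (u c - cluster_mean D u c)
      = (v c - column c Y) + (s * (1 + 2 * \<gamma>) - 1) *\<^sub>R (v c - cluster_mean D v c)"
    by (simp add: u algebra_simps)
  also have "\<dots> = v c - column c Y"
    unfolding s by simp
  finally have normal: "(u c - column c Y) + (2 * \<gamma>) *\<^sub>R (u c - cluster_mean D u c) = v c - column c Y" .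
  have "transpose X *v (v c - column c Y) = 0"
    unfolding v_def by (rule dotB_normal_equations[OF inv])
  then have "transpose X *v ((u c - column c Y) + (2 * \<gamma>) *\<^sub>R (u c - cluster_mean D u c)) = 0"
    unfolding normal .
  then show "transpose X *v ((X *v column c (dotB X Y ** shrink_matrix s D) - column c Y)
      + (2 * \<gamma>) *\<^sub>R (X *v column c (dotB X Y ** shrink_matrix s D)
        - cluster_mean D (\<lambda>k. X *v column k (dotB X Y ** shrink_matrix s D)) c)) = 0"
    unfolding u_def .
qed

lemma barB_eq_shrink_dotB_weight:
  fixes X :: "real^'p^'n" and Y :: "real^'r^'n"
  assumes "invertible (transpose X ** X)" and "is_partition D" and "0 < s" and "s \<le> 1"
  shows "barB ((1 - s) / (2 * s)) X D Y = dotB X Y ** shrink_matrix s D"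
proof -
  have "1 / (1 + 2 * ((1 - s) / (2 * s))) = s"
    using \<open>0 < s\<close> by (simp add: field_simps)
  then show ?thesis
    using barB_eq_shrink_dotB[OF assms(1,2), of "(1 - s) / (2 * s)" Y] assms(3,4) by simp
qed

lemma cluster_avg_matrix_diag:
  assumes "is_partition D"
  shows "cluster_avg_matrix D $ c $ c = 1 / real (card (cluster D c))"
  using mem_cluster[OF assms] by (simp add: cluster_avg_matrix_def)

lemma sum_column_cluster_avg_matrix:
  assumes "is_partition D"
  shows "(\<Sum>k\<in>UNIV. cluster_avg_matrix D $ k $ (c::'a::finite)) = 1"
  using card_cluster_pos[OF assms, of c]
  by (simp add: cluster_avg_matrix_def sum.inter_filter[symmetric] card_gt_0_iff)

lemma sum_sq_column_cluster_avg_matrix: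
  assumes "is_partition D"
  shows "(\<Sum>k\<in>UNIV. (cluster_avg_matrix D $ k $ (c::'a::finite))\<^sup>2) = 1 / real (card (cluster D c))"
proof -
  have "(cluster_avg_matrix D $ k $ c)\<^sup>2
      = (if k \<in> cluster D c then 1 / (real (card (cluster D c)))\<^sup>2 else 0)" for k
    by (simp add: cluster_avg_matrix_def power_one_over)
  then show ?thesis
    using card_cluster_pos[OF assms, of c]
    by (simp add: sum.inter_filter[symmetric] power2_eq_square card_gt_0_iff)
qed

lemma shrink_matrix_nth:
  "shrink_matrix s D $ k $ c = (if k = c then s else 0) + (1 - s) * cluster_avg_matrix D $ k $ c"
  by (simp add: shrink_matrix_def mat_def)

lemma sum_column_shrink_matrix:
  assumes "is_partition D"
  shows "(\<Sum>k\<in>UNIV. shrink_matrix s D $ k $ (c::'a::finite)) = 1"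
  by (simp add: shrink_matrix_nth sum.distrib sum_distrib_left[symmetric]
      sum_column_cluster_avg_matrix[OF assms])

lemma sum_sq_column_shrink_matrix:
  assumes "is_partition D"
  shows "(\<Sum>k\<in>UNIV. (shrink_matrix s D $ k $ (c::'a::finite))\<^sup>2)
    = s\<^sup>2 + (1 - s\<^sup>2) / real (card (cluster D c))"
proof -
  define P where "P k = cluster_avg_matrix D $ k $ c" for k
  define m where "m = real (card (cluster D c))"
  have "m \<noteq> 0"
    using card_cluster_pos[OF assms, of c] by (simp add: m_def card_gt_0_iff)
  have "(\<Sum>k\<in>UNIV. (shrink_matrix s D $ k $ c)\<^sup>2)
      = (\<Sum>k\<in>UNIV. (if k = c then s\<^sup>2 + 2 * s * (1 - s) * P k else 0) + (1 - s)\<^sup>2 * (P k)\<^sup>2)"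
    by (intro sum.cong refl) (simp add: shrink_matrix_nth P_def power2_sum power_mult_distrib)
  also have "\<dots> = s\<^sup>2 + 2 * s * (1 - s) * P c + (1 - s)\<^sup>2 * (\<Sum>k\<in>UNIV. (P k)\<^sup>2)"
    by (simp add: sum.distrib sum_distrib_left)
  also have "\<dots> = s\<^sup>2 + (1 - s\<^sup>2) / m"
    using \<open>m \<noteq> 0\<close> unfolding P_def cluster_avg_matrix_diag[OF assms]
      sum_sq_column_cluster_avg_matrix[OF assms] m_def[symmetric]
    by (simp add: field_simps power2_eq_square)
  finally show ?thesis unfolding m_def .
qed

(* Equals r - Q, the number of responses minus the number of clusters. *)
definition cluster_dof_loss :: "('a::finite) set set \<Rightarrow> real" where
  "cluster_dof_loss D = (\<Sum>c\<in>UNIV. 1 - 1 / real (card (cluster D c)))"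

lemma one_minus_inverse_card_cluster_nonneg:
  assumes "is_partition D"
  shows "0 \<le> 1 - 1 / real (card (cluster D (c::'a::finite)))"
  using card_cluster_pos[OF assms, of c] by (simp add: field_simps)

lemma cluster_dof_loss_nonneg: "is_partition D \<Longrightarrow> 0 \<le> cluster_dof_loss D"
  unfolding cluster_dof_loss_def by (intro sum_nonneg one_minus_inverse_card_cluster_nonneg)

lemma cluster_avg_matrix_eq_mat_1:
  assumes part: "is_partition D" and "cluster_dof_loss D = 0"
  shows "cluster_avg_matrix D = mat 1"
proof -
  have "cluster D c = {c}" for c
  proof -
    have "1 - 1 / real (card (cluster D c)) = 0"
      using assms(2) one_minus_inverse_card_cluster_nonneg[OF part]
      unfolding cluster_dof_loss_def by (simp add: sum_nonneg_eq_0_iff)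
    then have "card (cluster D c) = 1"
      by (simp add: field_simps)
    then show ?thesis
      using mem_cluster[OF part, of c] by (auto simp: card_1_singleton_iff)
  qed
  then show ?thesis
    by (simp add: cluster_avg_matrix_def mat_def vec_eq_iff)
qed

lemma equicorrelation_quadratic_form:
  fixes a :: "'a \<Rightarrow> real"
  assumes "finite K"
  shows "(\<Sum>k\<in>K. \<Sum>k'\<in>K. a k * a k' * (if k = k' then 1 else \<rho>))
    = (1 - \<rho>) * (\<Sum>k\<in>K. (a k)\<^sup>2) + \<rho> * (\<Sum>k\<in>K. a k)\<^sup>2"
proof -
  have "a k * a k' * (if k = k' then 1 else \<rho>)
      = \<rho> * (a k * a k') + (if k' = k then (1 - \<rho>) * (a k)\<^sup>2 else 0)" for k k'
    by (auto simp: power2_eq_square algebra_simps)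
  then have "(\<Sum>k\<in>K. \<Sum>k'\<in>K. a k * a k' * (if k = k' then 1 else \<rho>))
      = \<rho> * (\<Sum>k\<in>K. \<Sum>k'\<in>K. a k * a k') + (1 - \<rho>) * (\<Sum>k\<in>K. (a k)\<^sup>2)"
    using assms by (simp add: sum.distrib sum_distrib_left)
  moreover have "(\<Sum>k\<in>K. a k)\<^sup>2 = (\<Sum>k\<in>K. \<Sum>k'\<in>K. a k * a k')"
    by (simp add: power2_eq_square sum_product)
  ultimately show ?thesis by simp
qed

lemma equicorrelation_form_shrink_matrix:
  fixes D :: "'a::finite set set"
  assumes "is_partition D"
  shows "(\<Sum>c\<in>UNIV. \<Sum>k\<in>UNIV. \<Sum>k'\<in>UNIV.
      shrink_matrix s D $ k $ c * shrink_matrix s D $ k' $ c * (if k = k' then 1 else \<rho>))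
    = real CARD('a) - (1 - \<rho>) * (1 - s\<^sup>2) * cluster_dof_loss D"
proof -
  have "(1 - \<rho>) * (s\<^sup>2 + (1 - s\<^sup>2) / real (card (cluster D c))) + \<rho>
      = 1 - (1 - \<rho>) * (1 - s\<^sup>2) * (1 - 1 / real (card (cluster D c)))" for c :: 'a
    by (simp add: algebra_simps diff_divide_distrib add_divide_distrib)
  then have "(\<Sum>c\<in>UNIV. \<Sum>k\<in>UNIV. \<Sum>k'\<in>UNIV.
      shrink_matrix s D $ k $ c * shrink_matrix s D $ k' $ c * (if k = k' then 1 else \<rho>))
    = (\<Sum>c\<in>UNIV. 1 - (1 - \<rho>) * (1 - s\<^sup>2) * (1 - 1 / real (card (cluster D c))))"
    by (simp add: equicorrelation_quadratic_form sum_sq_column_shrink_matrix[OF assms]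
        sum_column_shrink_matrix[OF assms])
  also have "\<dots> = real CARD('a) - (1 - \<rho>) * (1 - s\<^sup>2) * cluster_dof_loss D"
    unfolding cluster_dof_loss_def sum_distrib_left by (simp add: sum_subtractf)
  finally show ?thesis .
qed

lemma sum_UNIV_prod:
  "(\<Sum>t\<in>(UNIV::('i::finite \<times> 'k::finite) set). f t) = (\<Sum>i\<in>UNIV. \<Sum>k\<in>UNIV. f (i, k))"
  by (subst UNIV_Times_UNIV[symmetric]) (simp add: sum.cartesian_product)

lemma sum_block_diagonal:
  fixes x :: "'i::finite \<Rightarrow> real" and y :: "'k::finite \<Rightarrow> real"
  shows "(\<Sum>t\<in>UNIV. \<Sum>t'\<in>UNIV. (x (fst t) * y (snd t)) * (x (fst t') * y (snd t'))
      * (if fst t = fst t' then \<sigma> (snd t) (snd t') else 0))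
    = (\<Sum>i\<in>UNIV. (x i)\<^sup>2) * (\<Sum>k\<in>UNIV. \<Sum>k'\<in>UNIV. y k * y k' * \<sigma> k k')"
proof -
  have diag: "(\<Sum>i'\<in>UNIV. \<Sum>k'\<in>UNIV. (x i * y k) * (x i' * y k') * (if i = i' then \<sigma> k k' else 0))
      = (x i)\<^sup>2 * (\<Sum>k'\<in>UNIV. y k * y k' * \<sigma> k k')" for i k
  proof -
    have "(\<Sum>i'\<in>UNIV. \<Sum>k'\<in>UNIV. (x i * y k) * (x i' * y k') * (if i = i' then \<sigma> k k' else 0))
        = (\<Sum>i'\<in>UNIV. if i = i' then \<Sum>k'\<in>UNIV. (x i * y k) * (x i' * y k') * \<sigma> k k' else 0)"
      by (intro sum.cong refl) auto
    also have "\<dots> = (x i)\<^sup>2 * (\<Sum>k'\<in>UNIV. y k * y k' * \<sigma> k k')"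
      by (simp add: sum_distrib_left power2_eq_square mult_ac)
    finally show ?thesis .
  qed
  have "(\<Sum>t\<in>UNIV. \<Sum>t'\<in>UNIV. (x (fst t) * y (snd t)) * (x (fst t') * y (snd t'))
      * (if fst t = fst t' then \<sigma> (snd t) (snd t') else 0))
    = (\<Sum>i\<in>UNIV. \<Sum>k\<in>UNIV. (x i)\<^sup>2 * (\<Sum>k'\<in>UNIV. y k * y k' * \<sigma> k k'))"
    by (simp only: sum_UNIV_prod fst_conv snd_conv diag)
  also have "\<dots> = (\<Sum>i\<in>UNIV. (x i)\<^sup>2) * (\<Sum>k\<in>UNIV. \<Sum>k'\<in>UNIV. y k * y k' * \<sigma> k k')"
    by (simp only: sum_product)
  finally show ?thesis .
qed

lemma frob2_eq_norm_sq: "frob2 (A::real^'m^'k) = (norm A)\<^sup>2"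
  unfolding frob2_def norm_vec_def L2_set_def by (simp add: sum_nonneg)

lemma integrable_mult_of_square_integrable:
  fixes f g :: "'a \<Rightarrow> real"
  assumes "f \<in> borel_measurable M" "g \<in> borel_measurable M"
    and "integrable M (\<lambda>\<omega>. (f \<omega>)\<^sup>2)" "integrable M (\<lambda>\<omega>. (g \<omega>)\<^sup>2)"
  shows "integrable M (\<lambda>\<omega>. f \<omega> * g \<omega>)"
proof (rule Bochner_Integration.integrable_bound)
  show "integrable M (\<lambda>\<omega>. (f \<omega>)\<^sup>2 + (g \<omega>)\<^sup>2)"
    using assms(3,4) by simp
  show "(\<lambda>\<omega>. f \<omega> * g \<omega>) \<in> borel_measurable M"
    using assms(1,2) by simp
  have "\<bar>x * y\<bar> \<le> x\<^sup>2 + y\<^sup>2" for x y :: real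
  proof -
    have "2 * (\<bar>x\<bar> * \<bar>y\<bar>) \<le> x\<^sup>2 + y\<^sup>2"
      using sum_squares_bound[of "\<bar>x\<bar>" "\<bar>y\<bar>"] by simp
    moreover have "0 \<le> \<bar>x\<bar> * \<bar>y\<bar>" by simp
    ultimately show ?thesis
      unfolding abs_mult by linarith
  qed
  then show "AE \<omega> in M. norm (f \<omega> * g \<omega>) \<le> norm ((f \<omega>)\<^sup>2 + (g \<omega>)\<^sup>2)"
    by simp
qed

context prob_space
begin

lemma
  fixes a :: "'t \<Rightarrow> real" and Z :: "'t \<Rightarrow> 'a \<Rightarrow> real"
  assumes "finite I"
    and int: "\<And>t. integrable M (Z t)"
    and int_mult: "\<And>t t'. integrable M (\<lambda>\<omega>. Z t \<omega> * Z t' \<omega>)"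
    and mean0: "\<And>t. expectation (Z t) = 0"
  shows integrable_affine_combination_sq: "integrable M (\<lambda>\<omega>. ((\<Sum>t\<in>I. a t * Z t \<omega>) + c)\<^sup>2)"
    and integral_affine_combination_sq: "expectation (\<lambda>\<omega>. ((\<Sum>t\<in>I. a t * Z t \<omega>) + c)\<^sup>2)
      = (\<Sum>t\<in>I. \<Sum>t'\<in>I. a t * a t' * expectation (\<lambda>\<omega>. Z t \<omega> * Z t' \<omega>)) + c\<^sup>2"
proof -
  have expand: "(\<lambda>\<omega>. ((\<Sum>t\<in>I. a t * Z t \<omega>) + c)\<^sup>2) = (\<lambda>\<omega>.
      (\<Sum>t\<in>I. \<Sum>t'\<in>I. a t * a t' * (Z t \<omega> * Z t' \<omega>)) + 2 * c * (\<Sum>t\<in>I. a t * Z t \<omega>) + c\<^sup>2)"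
    by (simp add: fun_eq_iff power2_eq_square sum_product algebra_simps)
  show "integrable M (\<lambda>\<omega>. ((\<Sum>t\<in>I. a t * Z t \<omega>) + c)\<^sup>2)"
    unfolding expand using int int_mult by simp
  show "expectation (\<lambda>\<omega>. ((\<Sum>t\<in>I. a t * Z t \<omega>) + c)\<^sup>2)
      = (\<Sum>t\<in>I. \<Sum>t'\<in>I. a t * a t' * expectation (\<lambda>\<omega>. Z t \<omega> * Z t' \<omega>)) + c\<^sup>2"
    unfolding expand using int int_mult
    by (simp add: integrable_sum integral_sum integral_add mean0 prob_space)
qed

lemma indep_rows_uncorrelated:
  fixes eps :: "'a \<Rightarrow> real^'r^'n"
  assumes meas: "\<And>i c. (\<lambda>\<omega>. eps \<omega> $ i $ c) \<in> borel_measurable M"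
    and indep: "indep_vars (\<lambda>_. borel) (\<lambda>i \<omega>. eps \<omega> $ i) UNIV"
    and sq_int: "\<And>i c. integrable M (\<lambda>\<omega>. (eps \<omega> $ i $ c)\<^sup>2)"
    and mean0: "\<And>i c. expectation (\<lambda>\<omega>. eps \<omega> $ i $ c) = 0"
    and "i \<noteq> i'"
  shows "expectation (\<lambda>\<omega>. eps \<omega> $ i $ k * eps \<omega> $ i' $ k') = 0"
proof -
  define proj where "proj j = (if j = i then (\<lambda>x::real^'r. x $ k) else (\<lambda>x. x $ k'))" for j
  have "proj j \<in> borel_measurable borel" for j
    unfolding proj_def by (auto intro: borel_measurable_continuous_onI continuous_on_component)
  then have "indep_vars (\<lambda>_. borel) (\<lambda>j \<omega>. proj j (eps \<omega> $ j)) {i, i'}"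
    by (intro indep_vars_compose2[OF indep_vars_subset[OF indep]]) auto
  moreover have "integrable M (\<lambda>\<omega>. proj j (eps \<omega> $ j))" for j
    unfolding proj_def by (auto intro: square_integrable_imp_integrable[OF meas sq_int])
  ultimately have "expectation (\<lambda>\<omega>. \<Prod>j\<in>{i, i'}. proj j (eps \<omega> $ j))
      = (\<Prod>j\<in>{i, i'}. expectation (\<lambda>\<omega>. proj j (eps \<omega> $ j)))"
    by (intro indep_vars_lebesgue_integral) auto
  then show ?thesis
    using \<open>i \<noteq> i'\<close> mean0 by (simp add: proj_def)
qed

lemma equicorrelated_second_moments:
  fixes eps :: "'a \<Rightarrow> real^'r^'n"
  assumes meas: "\<And>i c. (\<lambda>\<omega>. eps \<omega> $ i $ c) \<in> borel_measurable M"
    and indep: "indep_vars (\<lambda>_. borel) (\<lambda>i \<omega>. eps \<omega> $ i) UNIV"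
    and sq_int: "\<And>i c. integrable M (\<lambda>\<omega>. (eps \<omega> $ i $ c)\<^sup>2)"
    and mean0: "\<And>i c. expectation (\<lambda>\<omega>. eps \<omega> $ i $ c) = 0"
    and var1: "\<And>i c. expectation (\<lambda>\<omega>. (eps \<omega> $ i $ c)\<^sup>2) = 1"
    and cov: "\<And>i c k. c \<noteq> k \<Longrightarrow> expectation (\<lambda>\<omega>. eps \<omega> $ i $ c * eps \<omega> $ i $ k) = \<rho>"
  shows "expectation (\<lambda>\<omega>. eps \<omega> $ i $ k * eps \<omega> $ i' $ k')
    = (if i = i' then if k = k' then 1 else \<rho> else 0)"
  using var1[of i k] cov[of k k' i] indep_rows_uncorrelated[OF meas indep sq_int mean0, of i i' k k']
  by (auto simp: power2_eq_square)

lemma expected_frob2_linear_noise: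
  fixes eps :: "'a \<Rightarrow> real^'r^'n" and A :: "real^'n^'p" and S :: "real^'q^'r"
    and C :: "real^'q^'p" and \<Sigma> :: "'r \<Rightarrow> 'r \<Rightarrow> real"
  assumes meas: "\<And>i c. (\<lambda>\<omega>. eps \<omega> $ i $ c) \<in> borel_measurable M"
    and sq_int: "\<And>i c. integrable M (\<lambda>\<omega>. (eps \<omega> $ i $ c)\<^sup>2)"
    and mean0: "\<And>i c. expectation (\<lambda>\<omega>. eps \<omega> $ i $ c) = 0"
    and moments: "\<And>i i' k k'. expectation (\<lambda>\<omega>. eps \<omega> $ i $ k * eps \<omega> $ i' $ k')
      = (if i = i' then \<Sigma> k k' else 0)"
  shows "expectation (\<lambda>\<omega>. frob2 ((A ** eps \<omega>) ** S + C))
    = frob2 A * (\<Sum>c\<in>UNIV. \<Sum>k\<in>UNIV. \<Sum>k'\<in>UNIV. S $ k $ c * S $ k' $ c * \<Sigma> k k') + frob2 C"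
proof -
  define Z :: "'n \<times> 'r \<Rightarrow> 'a \<Rightarrow> real" where "Z t \<omega> = eps \<omega> $ fst t $ snd t" for t \<omega>
  define a where "a j c t = A $ j $ fst t * S $ snd t $ c" for j c and t :: "'n \<times> 'r"
  have int: "integrable M (Z t)" for t
    unfolding Z_def by (rule square_integrable_imp_integrable[OF meas sq_int])
  have int_mult: "integrable M (\<lambda>\<omega>. Z t \<omega> * Z t' \<omega>)" for t t'
    unfolding Z_def by (rule integrable_mult_of_square_integrable[OF meas meas sq_int sq_int])
  have Z_mean0: "expectation (Z t) = 0" for t
    unfolding Z_def by (rule mean0)
  have entry: "((A ** eps \<omega>) ** S + C) $ j $ c = (\<Sum>t\<in>UNIV. a j c t * Z t \<omega>) + C $ j $ c"
    for \<omega> j c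
  proof -
    have "((A ** eps \<omega>) ** S) $ j $ c = (\<Sum>k\<in>UNIV. \<Sum>i\<in>UNIV. A $ j $ i * eps \<omega> $ i $ k * S $ k $ c)"
      by (simp add: matrix_matrix_mult_def sum_distrib_right)
    also have "\<dots> = (\<Sum>i\<in>UNIV. \<Sum>k\<in>UNIV. A $ j $ i * eps \<omega> $ i $ k * S $ k $ c)"
      by (rule sum.swap)
    also have "\<dots> = (\<Sum>t\<in>UNIV. a j c t * Z t \<omega>)"
      by (simp add: sum_UNIV_prod a_def Z_def mult_ac)
    finally show ?thesis by simp
  qed
  have "expectation (\<lambda>\<omega>. ((\<Sum>t\<in>UNIV. a j c t * Z t \<omega>) + C $ j $ c)\<^sup>2)
      = (\<Sum>i\<in>UNIV. (A $ j $ i)\<^sup>2) * (\<Sum>k\<in>UNIV. \<Sum>k'\<in>UNIV. S $ k $ c * S $ k' $ c * \<Sigma> k k')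
        + (C $ j $ c)\<^sup>2" for j c
    unfolding integral_affine_combination_sq[OF finite int int_mult Z_mean0]
    unfolding Z_def moments a_def
    by (simp only: sum_block_diagonal[of "\<lambda>i. A $ j $ i" "\<lambda>k. S $ k $ c"])
  then have "expectation (\<lambda>\<omega>. frob2 ((A ** eps \<omega>) ** S + C))
      = (\<Sum>j\<in>UNIV. \<Sum>c\<in>UNIV. (\<Sum>i\<in>UNIV. (A $ j $ i)\<^sup>2)
          * (\<Sum>k\<in>UNIV. \<Sum>k'\<in>UNIV. S $ k $ c * S $ k' $ c * \<Sigma> k k') + (C $ j $ c)\<^sup>2)"
    unfolding frob2_def entry
    by (simp add: integral_sum integrable_sum
        integrable_affine_combination_sq[where Z = Z, OF finite int int_mult Z_mean0])
  also have "\<dots> = frob2 A * (\<Sum>c\<in>UNIV. \<Sum>k\<in>UNIV. \<Sum>k'\<in>UNIV. S $ k $ c * S $ k' $ c * \<Sigma> k k')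
      + frob2 C"
    by (simp add: frob2_def sum.distrib sum_product)
  finally show ?thesis .
qed

end

lemma ols_left_inverse:
  fixes X :: "real^'p^'n"
  assumes "invertible (transpose X ** X)"
  shows "(matrix_inv (transpose X ** X) ** transpose X) ** X = mat 1"
  using matrix_inv_left[OF assms] by (simp add: matrix_mul_assoc[symmetric])

lemma dotB_linear_model:
  fixes X :: "real^'p^'n"
  assumes "invertible (transpose X ** X)"
  shows "dotB X (X ** B + E) = B + (matrix_inv (transpose X ** X) ** transpose X) ** E"
  unfolding dotB_def matrix_add_ldistrib matrix_mul_assoc ols_left_inverse[OF assms] by simp

lemma frob2_ols_matrix_pos:
  fixes X :: "real^'p^'n"
  assumes "invertible (transpose X ** X)"
  shows "0 < frob2 (matrix_inv (transpose X ** X) ** transpose X)"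
proof -
  have "matrix_inv (transpose X ** X) ** transpose X \<noteq> 0"
  proof
    assume "matrix_inv (transpose X ** X) ** transpose X = 0"
    then have "(mat 1 :: real^'p^'p) $ i $ i = 0" for i
      using ols_left_inverse[OF assms] by simp
    then show False by (simp add: mat_def)
  qed
  then show ?thesis by (simp add: frob2_eq_norm_sq)
qed

lemma frob2_scaleR: "frob2 (a *\<^sub>R A) = a\<^sup>2 * frob2 A"
  by (simp add: frob2_eq_norm_sq power_mult_distrib)

lemma (in prob_space) risk_shrunk_ols:
  fixes X :: "real^'p^'n" and Bstar :: "real^'r^'p" and eps :: "'a \<Rightarrow> real^'r^'n"
  assumes inv: "invertible (transpose X ** X)" and part: "is_partition D"
    and meas: "\<And>i c. (\<lambda>\<omega>. eps \<omega> $ i $ c) \<in> borel_measurable M"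
    and sq_int: "\<And>i c. integrable M (\<lambda>\<omega>. (eps \<omega> $ i $ c)\<^sup>2)"
    and mean0: "\<And>i c. expectation (\<lambda>\<omega>. eps \<omega> $ i $ c) = 0"
    and moments: "\<And>i i' k k'. expectation (\<lambda>\<omega>. eps \<omega> $ i $ k * eps \<omega> $ i' $ k')
      = (if i = i' then if k = k' then 1 else \<rho> else 0)"
  shows "expectation (\<lambda>\<omega>. frob2 (dotB X (X ** Bstar + eps \<omega>) ** shrink_matrix s D - Bstar))
    = frob2 (matrix_inv (transpose X ** X) ** transpose X)
        * (real CARD('r) - (1 - \<rho>) * (1 - s\<^sup>2) * cluster_dof_loss D)
      + (1 - s)\<^sup>2 * frob2 (Bstar ** cluster_avg_matrix D - Bstar)"
proof -
  define A where "A = matrix_inv (transpose X ** X) ** transpose X"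
  have "Bstar ** shrink_matrix s D = s *\<^sub>R Bstar + (1 - s) *\<^sub>R (Bstar ** cluster_avg_matrix D)"
    unfolding shrink_matrix_def matrix_add_ldistrib matrix_scalar_ac scalar_matrix_assoc[symmetric]
    by simp
  then have "Bstar ** shrink_matrix s D - Bstar = (1 - s) *\<^sub>R (Bstar ** cluster_avg_matrix D - Bstar)"
    by (simp add: algebra_simps)
  then have error: "dotB X (X ** Bstar + eps \<omega>) ** shrink_matrix s D - Bstar
      = (A ** eps \<omega>) ** shrink_matrix s D + (1 - s) *\<^sub>R (Bstar ** cluster_avg_matrix D - Bstar)" for \<omega>
    unfolding dotB_linear_model[OF inv] A_def[symmetric] matrix_add_rdistrib by (simp add: algebra_simps)
  show ?thesis
    unfolding A_def[symmetric] error
      expected_frob2_linear_noise[where \<Sigma> = "\<lambda>k k'. if k = k' then 1 else \<rho>",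
        OF meas sq_int mean0 moments]
      equicorrelation_form_shrink_matrix[OF part] frob2_scaleR ..
qed

lemma exists_shrinkage_weight:
  fixes K c :: real
  assumes "0 \<le> K" "0 \<le> c" "c = 0 \<Longrightarrow> K = 0"
  shows "\<exists>s. 0 < s \<and> s < 1 \<and> (1 - s)\<^sup>2 * K \<le> c * (1 - s\<^sup>2)"
proof (cases "c = 0")
  case True
  then show ?thesis using assms(3) by (intro exI[of _ "1/2"]) simp
next
  case False
  (* With s = 1 - \<tau>, the claim reads \<tau> (\<tau> K) \<le> \<tau> (2 - \<tau>) c, so \<tau> K \<le> c suffices. *)
  define \<tau> where "\<tau> = min (1/2) (c / (K + 1))"
  have "\<tau> \<le> 1/2"
    unfolding \<tau>_def by (rule min.cobounded1)
  moreover have "0 < \<tau>"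
    using False assms(1,2) unfolding \<tau>_def by simp
  ultimately have \<tau>: "0 < \<tau>" "\<tau> \<le> 1/2" by simp_all
  have "\<tau> \<le> c / (K + 1)"
    unfolding \<tau>_def by (rule min.cobounded2)
  then have "\<tau> * (K + 1) \<le> c"
    using assms(1) by (simp add: pos_le_divide_eq)
  then have "\<tau> * K \<le> c"
    using \<tau> by (simp add: algebra_simps)
  have "(1 - (1 - \<tau>))\<^sup>2 * K = \<tau> * (\<tau> * K)"
    by (simp add: power2_eq_square)
  also have "\<dots> \<le> \<tau> * c"
    using \<open>\<tau> * K \<le> c\<close> \<tau> by (simp add: mult_left_mono)
  also have "\<dots> \<le> (\<tau> * (2 - \<tau>)) * c"
    using \<tau> assms(2) by (intro mult_right_mono) (simp_all add: algebra_simps)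
  also have "\<dots> = c * (1 - (1 - \<tau>)\<^sup>2)"
    by (simp add: power2_eq_square algebra_simps)
  finally show ?thesis
    using \<tau> by (intro exI[of _ "1 - \<tau>"]) simp
qed

theorem theorem2:
  fixes M :: "'a measure"
    and X :: "real^'p^'n"
    and Bstar :: "real^'r^'p"
    and eps :: "'a \<Rightarrow> real^'r^'n"
    and \<rho> :: real
    and D :: "'r set set"
  assumes prob: "prob_space M"
    and np: "CARD('n) > CARD('p)"
    and inv: "invertible (transpose X ** X)"
    and rho: "0 < \<rho>" "\<rho> < 1"
    and part: "is_partition D"
    and meas: "\<And>i c. (\<lambda>\<omega>. eps \<omega> $ i $ c) \<in> borel_measurable M"
    and indep: "prob_space.indep_vars M (\<lambda>_. borel) (\<lambda>i \<omega>. eps \<omega> $ i) UNIV"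
    and ident: "\<And>i j. distr M borel (\<lambda>\<omega>. eps \<omega> $ i) = distr M borel (\<lambda>\<omega>. eps \<omega> $ j)"
    and sq_int: "\<And>i c. integrable M (\<lambda>\<omega>. (eps \<omega> $ i $ c)^2)"
    and mean0: "\<And>i c. (LINT \<omega>|M. eps \<omega> $ i $ c) = 0"
    and var1: "\<And>i c. (LINT \<omega>|M. (eps \<omega> $ i $ c)^2) = 1"
    and cov: "\<And>i c k. c \<noteq> k \<Longrightarrow> (LINT \<omega>|M. eps \<omega> $ i $ c * eps \<omega> $ i $ k) = \<rho>"
  shows "\<exists>\<gamma>>0.
     (LINT \<omega>|M. frob2 (barB \<gamma> X D (X ** Bstar + eps \<omega>) - Bstar))
       \<le> (LINT \<omega>|M. frob2 (dotB X (X ** Bstar + eps \<omega>) - Bstar))"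
proof -
  (* Only first and second moments of the noise enter. *)
  interpret prob_space M by (rule prob)
  define T where "T = frob2 (matrix_inv (transpose X ** X) ** transpose X)"
  define K where "K = frob2 (Bstar ** cluster_avg_matrix D - Bstar)"
  define R where "R = cluster_dof_loss D"
  have risk: "expectation (\<lambda>\<omega>. frob2 (dotB X (X ** Bstar + eps \<omega>) ** shrink_matrix s D - Bstar))
      = T * (real CARD('r) - (1 - \<rho>) * (1 - s\<^sup>2) * R) + (1 - s)\<^sup>2 * K" for s
    unfolding T_def K_def R_def
    by (rule risk_shrunk_ols[OF inv part meas sq_int mean0
          equicorrelated_second_moments[OF meas indep sq_int mean0 var1 cov]])
  have "0 < T" "0 \<le> R" "0 \<le> K" "R = 0 \<Longrightarrow> K = 0"
    using frob2_ols_matrix_pos[OF inv] cluster_dof_loss_nonneg[OF part]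
      cluster_avg_matrix_eq_mat_1[OF part] by (simp_all add: T_def R_def K_def frob2_eq_norm_sq)
  then obtain s where s: "0 < s" "s < 1"
    and tradeoff: "(1 - s)\<^sup>2 * K \<le> T * (1 - \<rho>) * R * (1 - s\<^sup>2)"
    using exists_shrinkage_weight[of K "T * (1 - \<rho>) * R"] rho by auto
  have "expectation (\<lambda>\<omega>. frob2 (barB ((1 - s) / (2 * s)) X D (X ** Bstar + eps \<omega>) - Bstar))
      = T * (real CARD('r) - (1 - \<rho>) * (1 - s\<^sup>2) * R) + (1 - s)\<^sup>2 * K"
    using s by (simp add: barB_eq_shrink_dotB_weight[OF inv part] risk)
  also have "\<dots> \<le> T * real CARD('r)"
    using tradeoff by (simp add: algebra_simps)
  also have "\<dots> = expectation (\<lambda>\<omega>. frob2 (dotB X (X ** Bstar + eps \<omega>) - Bstar))"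
    using risk[of 1] by (simp add: shrink_matrix_1)
  finally show ?thesis
    using s by (intro exI[of _ "(1 - s) / (2 * s)"]) simp
qed

end
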